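(* Assume the setup (S) of the context, and suppose moreover that $\mathbb{B}$ is split exact and $I=R$. Then the complex $\mathbb{A}$ is split exact.
   Context: Setup (S): $R$ is a Noetherian unique factorization domain with $1/2\in R$; $p\ge1$, $q\ge3$, $n=p+2$; $B_0=R^{q-2}$, $B_1=R^{p+q}$, $H=R^n$. On $H\oplus H^*$ let $Q(f,f')=f'(f)$ and $\beta\big((f,f'),(g,g')\big)=f'(g)+g'(f)$, which identifies $(H\oplus H^* )^*$ with $H\oplus H^*$. Let $\mathbb{B}\colon 0\to B_0^*\xrightarrow{\delta_4}B_1^*\xrightarrow{\delta_3}H\oplus H^*\xrightarrow{\delta_2}B_1\xrightarrow{\delta_1}B_0$ be a complex with $\delta_2=\delta_3^*$ and $\delta_1=\delta_4^*$ (duals taken using $\beta$). The Clifford action of $H\oplus H^*$ on $\bigwedge H$ is $(f,f')\cdot\omega=f\wedge\omega+\iota_{f'}(\omega)$, where $\iota_{f'}(e_1\wedge\cdots\wedge e_j)=\sum_i(-1)^{i-1}f'(e_i)\,e_1\wedge\cdots\widehat{e_i}\cdots\wedge e_j$. Let $s\in\bigwedge^{\mathrm{odd}}H$ be an element such that for every prime $\mathfrak p\notin\operatorname{Supp}H_0(\mathbb{B})$, the image of $s$ generates the $R_{\mathfrak p}$-module $\{\omega\in\bigwedge H_{\mathfrak p}: x\cdot\omega=0\ \forall x\in(\operatorname{im}\delta_3)_{\mathfrak p}\}$. Let $s_1\in H$ be the degree-one component of $s$, and let $u\in B_1^*$ be any element with $\delta_3(u)=(s_1,0)$. Define $\mathbb{A}\colon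 0\to B_0^*\oplus R\xrightarrow{d_3}B_1^*\xrightarrow{d_2}H^*\xrightarrow{d_1}R$ by $d_3(b,r)=\delta_4(b)+ru$; $d_2=\pi_{H^*}\circ\delta_3$ with $\pi_{H^*}$ the projection onto $H^*$; $d_1(f')=f'(s_1)$. Let $I=\operatorname{im}d_1$. *)

theory Defs
  imports "HOL-Computational_Algebra.Fraction_Field"
          "HOL-Computational_Algebra.Factorial_Ring"
          "Jordan_Normal_Form.Matrix"
begin

definition is_ideal :: "'a::comm_ring_1 set \<Rightarrow> bool" where
  "is_ideal I \<longleftrightarrow> 0 \<in> I \<and> (\<forall>x\<in>I. \<forall>y\<in>I. x + y \<in> I) \<and> (\<forall>r. \<forall>x\<in>I. r * x \<in> I)"

definition prime_ideal :: "'a::comm_ring_1 set \<Rightarrow> bool" where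
  "prime_ideal P \<longleftrightarrow> is_ideal P \<and> P \<noteq> UNIV \<and> (\<forall>a b. a * b \<in> P \<longrightarrow> a \<in> P \<or> b \<in> P)"

definition ideal_gen :: "'a::comm_ring_1 set \<Rightarrow> 'a set" where
  "ideal_gen F = {(\<Sum>f\<in>G. c f * f) | G c. finite G \<and> G \<subseteq> F}"

definition noetherian_ring :: "'a::comm_ring_1 itself \<Rightarrow> bool" where
  "noetherian_ring _ \<longleftrightarrow>
     (\<forall>I::'a set. is_ideal I \<longrightarrow> (\<exists>F. finite F \<and> F \<subseteq> I \<and> I = ideal_gen F))"

definition is_chain :: "nat list \<Rightarrow> 'a::comm_ring_1 mat list \<Rightarrow> bool" where
  "is_chain ks ds \<longleftrightarrow> length ks = length ds + 1 \<and>
     (\<forall>i<length ds. ds!i \<in> carrier_mat (ks!(i+1)) (ks!i)) \<and>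
     (\<forall>i. i + 1 < length ds \<longrightarrow> ds!(i+1) * ds!i = 0\<^sub>m (ks!(i+2)) (ks!i))"

definition exact_at :: "nat list \<Rightarrow> 'a::comm_ring_1 mat list \<Rightarrow> nat \<Rightarrow> bool" where
  "exact_at ks ds i \<longleftrightarrow>
     {v \<in> carrier_vec (ks!i). ds!i *\<^sub>v v = 0\<^sub>v (ks!(i+1))} =
     {ds!(i-1) *\<^sub>v w | w. w \<in> carrier_vec (ks!(i-1))}"

definition split_exact :: "nat list \<Rightarrow> 'a::comm_ring_1 mat list \<Rightarrow> bool" where
  "split_exact ks ds \<longleftrightarrow>
     (let ks' = 0 # ks @ [0];
          ds' = 0\<^sub>m (hd ks) 0 # ds @ [0\<^sub>m 0 (last ks)]
      in is_chain ks' ds' \<and>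
         (\<forall>i. 0 < i \<and> i < length ds' \<longrightarrow> exact_at ks' ds' i) \<and>
         (\<forall>i<length ds'. \<exists>s \<in> carrier_mat (ks'!i) (ks'!(i+1)). ds'!i * s * ds'!i = ds'!i))"

text \<open>An element of the exterior algebra of R^n is a coefficient function on subsets
  of {..<n} (basis e_S = e_{i1} \<and> ... \<and> e_{ik}, i1 < ... < ik), zero outside.\<close>
definition ext_alg :: "nat \<Rightarrow> (nat set \<Rightarrow> 'b::zero) set" where
  "ext_alg n = {\<omega>. \<forall>S. \<not> S \<subseteq> {..<n} \<longrightarrow> \<omega> S = 0}"

text \<open>Clifford action of x = (f,f') in H \<oplus> H* (coordinates 0..n-1 for f, n..2n-1 for f'):
  x \<cdot> \<omega> = f \<and> \<omega> + \<iota>_{f'} \<omega>.\<close>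
definition clifford :: "nat \<Rightarrow> 'b::comm_ring_1 vec \<Rightarrow> (nat set \<Rightarrow> 'b) \<Rightarrow> (nat set \<Rightarrow> 'b)" where
  "clifford n x \<omega> = (\<lambda>S. if S \<subseteq> {..<n} then
       (\<Sum>i\<in>S. (-1) ^ card {j\<in>S. j < i} * x $ i * \<omega> (S - {i}))
     + (\<Sum>i\<in>{..<n} - S. (-1) ^ card {j\<in>S. j < i} * x $ (n + i) * \<omega> (insert i S))
     else 0)"

definition emb :: "'a::idom \<Rightarrow> 'a fract" where "emb a = Fraction_Field.Fract a 1"

definition loc_ring :: "'a::idom set \<Rightarrow> 'a fract set" where
  "loc_ring P = {Fraction_Field.Fract a t | a t. t \<notin> P}"

definition loc_vecs :: "'a::idom set \<Rightarrow> nat \<Rightarrow> 'a fract vec set" where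
  "loc_vecs P k = {v \<in> carrier_vec k. \<forall>i<k. v $ i \<in> loc_ring P}"

definition loc_image :: "'a::idom set \<Rightarrow> 'a mat \<Rightarrow> 'a fract vec set" where
  "loc_image P M = {map_mat emb M *\<^sub>v c | c. c \<in> loc_vecs P (dim_col M)}"

text \<open>P \<in> Supp (coker M) iff (coker M)_P \<noteq> 0 iff (R_P)^m \<noteq> (im M)_P.\<close>
definition in_supp_coker :: "'a::idom set \<Rightarrow> 'a mat \<Rightarrow> bool" where
  "in_supp_coker P M \<longleftrightarrow> loc_vecs P (dim_row M) \<noteq> loc_image P M"

definition loc_ext_alg :: "'a::idom set \<Rightarrow> nat \<Rightarrow> (nat set \<Rightarrow> 'a fract) set" where
  "loc_ext_alg P n = {\<omega> \<in> ext_alg n. \<forall>S. S \<subseteq> {..<n} \<longrightarrow> \<omega> S \<in> loc_ring P}"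

definition loc_annihilated :: "'a::idom set \<Rightarrow> nat \<Rightarrow> 'a mat \<Rightarrow> (nat set \<Rightarrow> 'a fract) set" where
  "loc_annihilated P n M =
     {\<omega> \<in> loc_ext_alg P n. \<forall>x \<in> loc_image P M. clifford n x \<omega> = (\<lambda>_. 0)}"

definition beta_mat :: "nat \<Rightarrow> 'a::comm_ring_1 mat" where
  "beta_mat n = mat (2*n) (2*n) (\<lambda>(i,j). if (i < n \<and> j = i + n) \<or> (n \<le> i \<and> j + n = i) then 1 else 0)"

text \<open>B: 0 -> B0* -d4-> B1* -d3-> H\<oplus>H* -d3^*-> B1 -d4^*-> B0, with the dual of d3
  taken through the identification by beta.\<close>
definition cplxB_dims :: "nat \<Rightarrow> nat \<Rightarrow> nat list" where
  "cplxB_dims p q = [q - 2, p + q, 2 * (p + 2), p + q, q - 2]"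

definition cplxB_maps :: "nat \<Rightarrow> 'a::comm_ring_1 mat \<Rightarrow> 'a mat \<Rightarrow> 'a mat list" where
  "cplxB_maps n D4 D3 = [D4, D3, transpose_mat D3 * beta_mat n, transpose_mat D4]"

definition deg1 :: "nat \<Rightarrow> (nat set \<Rightarrow> 'a) \<Rightarrow> 'a vec" where
  "deg1 n s = vec n (\<lambda>i. s {i})"

text \<open>A: 0 -> B0*\<oplus>R -d3-> B1* -d2-> H* -d1-> R.\<close>
definition cplxA_dims :: "nat \<Rightarrow> nat \<Rightarrow> nat list" where
  "cplxA_dims p q = [q - 2 + 1, p + q, p + 2, 1]"

definition A_d3 :: "nat \<Rightarrow> nat \<Rightarrow> 'a::comm_ring_1 mat \<Rightarrow> 'a vec \<Rightarrow> 'a mat" where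
  "A_d3 p q D4 u = mat (p + q) (q - 2 + 1) (\<lambda>(i,j). if j < q - 2 then D4 $$ (i,j) else u $ i)"

definition A_d2 :: "nat \<Rightarrow> nat \<Rightarrow> 'a::comm_ring_1 mat \<Rightarrow> 'a mat" where
  "A_d2 p q D3 = mat (p + 2) (p + q) (\<lambda>(i,j). D3 $$ (p + 2 + i, j))"

definition A_d1 :: "nat \<Rightarrow> 'a::comm_ring_1 vec \<Rightarrow> 'a mat" where
  "A_d1 n s1 = mat 1 n (\<lambda>(_,j). s1 $ j)"

definition cplxA_maps :: "nat \<Rightarrow> nat \<Rightarrow> 'a::comm_ring_1 mat \<Rightarrow> 'a mat \<Rightarrow> 'a vec \<Rightarrow> 'a vec \<Rightarrow> 'a mat list" where
  "cplxA_maps p q D4 D3 u s1 = [A_d3 p q D4 u, A_d2 p q D3, A_d1 (p + 2) s1]"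

end

theory Submission
  imports Defs "Jordan_Normal_Form.Matrix_Kernel"
begin

text \<open>
  Since \<open>\<BB>\<close> is exact, \<open>\<delta>\<^sub>4\<^sup>*\<close> is onto, so the zero ideal lies outside
  \<open>Supp H\<^sub>0(\<BB>)\<close> and the hypothesis on \<open>s\<close> at the generic point says that \<open>s\<close> is
  annihilated by \<open>im \<delta>\<^sub>3\<close> already over \<open>R\<close>. For \<open>x = (x', x'') \<in> im \<delta>\<^sub>3 \<subseteq> H \<oplus> H\<^sup>*\<close>
  the components of \<open>x \<cdot> s = 0\<close> in degrees 0 and 2 read \<open>x''(s\<^sub>1) = 0\<close> and
  \<open>x'\<^sub>j s\<^sub>i - x'\<^sub>i s\<^sub>j = \<Sum>\<^sub>m c\<^sub>i\<^sub>j\<^sub>m x''\<^sub>m\<close>; the first gives \<open>d\<^sub>1 d\<^sub>2 = 0\<close>, and \<open>I = R\<close>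
  gives \<open>\<lambda>\<close> with \<open>\<lambda>(s\<^sub>1) = 1\<close>. Since \<open>\<delta>\<^sub>3 (d\<^sub>3(b, r)) = r (s\<^sub>1, 0)\<close>, \<open>\<lambda>\<close> and
  exactness of \<open>\<BB>\<close> at \<open>B\<^sub>0\<^sup>*\<close> make \<open>d\<^sub>3\<close> injective. If \<open>x'' = 0\<close>, the relations force
  \<open>x' = r s\<^sub>1\<close>, i.e. \<open>x = \<delta>\<^sub>3(r u)\<close>, and exactness of \<open>\<BB>\<close> at \<open>B\<^sub>1\<^sup>*\<close> gives exactness
  of \<open>\<AA>\<close> there. A syzygy \<open>f\<close> of \<open>s\<^sub>1\<close> is completed by the relations to an element
  \<open>(g, f)\<close> of \<open>ker \<delta>\<^sub>2 = im \<delta>\<^sub>3\<close>, which is exactness at \<open>H\<^sup>*\<close>. A bounded exact complex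
  of finite free modules splits, the inner inverses being built from the right end.
\<close>

definition mat_image :: "'a::semiring_0 mat \<Rightarrow> 'a vec set" where
  "mat_image A = {A *\<^sub>v w | w. w \<in> carrier_vec (dim_col A)}"

lemma mat_imageI: "A \<in> carrier_mat m k \<Longrightarrow> w \<in> carrier_vec k \<Longrightarrow> A *\<^sub>v w \<in> mat_image A"
  unfolding mat_image_def by auto

lemma mat_imageE:
  assumes "A \<in> carrier_mat m k" "v \<in> mat_image A"
  obtains w where "w \<in> carrier_vec k" "v = A *\<^sub>v w"
  using assms unfolding mat_image_def by auto

lemma mult_mat_vec_smult_vec:
  fixes A :: "'a::comm_semiring_1 mat"
  assumes "A \<in> carrier_mat m k" "v \<in> carrier_vec k"
  shows "A *\<^sub>v (c \<cdot>\<^sub>v v) = c \<cdot>\<^sub>v (A *\<^sub>v v)"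
  using assms by (auto intro!: eq_vecI simp: scalar_prod_def sum_distrib_left mult_ac)

lemma mult_mat_vec_unit_vec:
  "A \<in> carrier_mat m k \<Longrightarrow> j < k \<Longrightarrow> A *\<^sub>v unit_vec k j = col (A :: 'a::semiring_1 mat) j"
  by (auto intro!: eq_vecI)

lemma mult_mat_vec_zero_vec [simp]:
  "A \<in> carrier_mat m k \<Longrightarrow> A *\<^sub>v 0\<^sub>v k = (0\<^sub>v m :: 'a::semiring_0 vec)"
  by (auto intro!: eq_vecI)

lemma vec_first_append_vec [simp]: "v \<in> carrier_vec n \<Longrightarrow> vec_first (v @\<^sub>v w) n = v"
  by (auto simp: vec_first_def intro!: eq_vecI)

lemma vec_last_append_vec [simp]: "w \<in> carrier_vec n \<Longrightarrow> vec_last (v @\<^sub>v w) n = w"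
  by (auto simp: vec_last_def intro!: eq_vecI)

lemma mat_image_zero_cols [simp]: "mat_image (0\<^sub>m k 0 :: 'a::semiring_0 mat) = {0\<^sub>v k}"
  unfolding mat_image_def by (auto intro!: eq_vecI exI[of _ "0\<^sub>v 0"] simp: scalar_prod_def)

lemma mat_kernel_zero_rows [simp]: "mat_kernel (0\<^sub>m 0 k :: 'a::comm_ring_1 mat) = carrier_vec k"
  unfolding mat_kernel_def by auto

lemma mult_eq_zero_if_image_subset_kernel:
  fixes A B :: "'a::comm_ring_1 mat"
  assumes A: "A \<in> carrier_mat m k" and B: "B \<in> carrier_mat l m"
    and im_ker: "mat_image A \<subseteq> mat_kernel B"
  shows "B * A = 0\<^sub>m l k"
proof (rule mat_col_eqI)
  fix j assume "j < dim_col (0\<^sub>m l k :: 'a mat)"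
  then have j: "j < k" by simp
  have "col A j \<in> mat_kernel B"
    using im_ker mat_imageI[OF A, of "unit_vec k j"] mult_mat_vec_unit_vec[OF A j] by auto
  then show "col (B * A) j = col (0\<^sub>m l k) j"
    using A B j by (auto simp: col_mult2 dest: mat_kernelD[OF B])
qed (use A B in auto)

lemma mat_factor_through_image:
  fixes A P :: "'a::comm_ring_1 mat"
  assumes A: "A \<in> carrier_mat m k" and P: "P \<in> carrier_mat m l"
    and cols: "\<And>j. j < l \<Longrightarrow> col P j \<in> mat_image A"
  shows "\<exists>T \<in> carrier_mat k l. A * T = P"
proof -
  have "\<forall>j. \<exists>w. j < l \<longrightarrow> w \<in> carrier_vec k \<and> col P j = A *\<^sub>v w"
    using cols A by (metis mat_imageE)
  then obtain w where w: "\<And>j. j < l \<Longrightarrow> w j \<in> carrier_vec k \<and> col P j = A *\<^sub>v w j"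
    by metis
  define T where "T = mat k l (\<lambda>(i,j). w j $ i)"
  have T: "T \<in> carrier_mat k l" by (simp add: T_def)
  have "A * T = P"
  proof (rule mat_col_eqI)
    fix j assume "j < dim_col P"
    then have j: "j < l" using P by simp
    have "col T j = w j" using w[OF j] j by (auto simp: T_def)
    then show "col (A * T) j = col P j" using A T j w[OF j] by (simp add: col_mult2)
  qed (use A T P in auto)
  with T show ?thesis by blast
qed

text \<open>If \<open>B G B = B\<close> and \<open>ker B = im A\<close>, the columns of the projection \<open>1 - G B\<close> onto
  \<open>ker B\<close> lift through \<open>A\<close>, and any such lift \<open>H\<close> satisfies \<open>A H A = A\<close>.\<close>
lemma inner_inverse_of_exact:
  fixes A B G :: "'a::comm_ring_1 mat"
  assumes A: "A \<in> carrier_mat m k" and B: "B \<in> carrier_mat l m" and G: "G \<in> carrier_mat m l"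
    and BGB: "B * G * B = B" and exact: "mat_kernel B = mat_image A"
  shows "\<exists>H \<in> carrier_mat k m. A * H * A = A"
proof -
  define P where "P = 1\<^sub>m m - G * B"
  have P: "P \<in> carrier_mat m m" using G B by (auto simp: P_def)
  have "B * P = B * 1\<^sub>m m - B * (G * B)"
    unfolding P_def using B G by (subst mult_minus_distrib_mat[of _ l m]) auto
  also have "\<dots> = B - B" using B G by (simp add: BGB flip: assoc_mult_mat[OF B G B])
  finally have BP: "B * P = 0\<^sub>m l m" using B by simp
  have "col P j \<in> mat_image A" if j: "j < m" for j
  proof -
    have "B *\<^sub>v col P j = 0\<^sub>v l" using BP j by (simp flip: col_mult2[OF B P j])
    then have "col P j \<in> mat_kernel B" using P j by (intro mat_kernelI[OF B]) auto
    then show ?thesis using exact by simp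
  qed
  then obtain H where H: "H \<in> carrier_mat k m" and AH: "A * H = P"
    using mat_factor_through_image[OF A P] by blast
  have BA: "B * A = 0\<^sub>m l k"
    using mult_eq_zero_if_image_subset_kernel[OF A B] exact by simp
  have "A * H * A = 1\<^sub>m m * A - G * B * A"
    unfolding AH P_def using A B G by (subst minus_mult_distrib_mat[of _ m m]) auto
  also have "\<dots> = A - G * 0\<^sub>m l k" using A by (simp add: assoc_mult_mat[OF G B A] BA)
  also have "\<dots> = A" using A G by (intro eq_matI) auto
  finally show ?thesis using H by blast
qed

lemma exact_at_iff_kernel_eq_image:
  assumes "is_chain ks ds" "0 < i" "i < length ds"
  shows "exact_at ks ds i \<longleftrightarrow> mat_kernel (ds!i) = mat_image (ds!(i-1))"
proof -
  have "ds!i \<in> carrier_mat (ks!(i+1)) (ks!i)" "ds!(i-1) \<in> carrier_mat (ks!i) (ks!(i-1))"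
    using assms unfolding is_chain_def by (auto dest: spec[of _ "i-1"])
  then show ?thesis unfolding exact_at_def mat_kernel_def mat_image_def by auto
qed

lemma exact_chain_inner_inverses:
  assumes chain: "is_chain ks ds" and exact: "\<forall>i. 0 < i \<and> i < length ds \<longrightarrow> exact_at ks ds i"
    and last_zero: "ks ! length ds = 0" and i: "i < length ds"
  shows "\<exists>S \<in> carrier_mat (ks!i) (ks!(i+1)). ds!i * S * ds!i = ds!i"
proof -
  have "i \<le> length ds - 1" using i by simp
  then show ?thesis
  proof (induction i rule: inc_induct)
    case base
    obtain L where L: "length ds = Suc L" using i by (cases "length ds") auto
    then have "ds!L \<in> carrier_mat 0 (ks!L)"
      using chain last_zero unfolding is_chain_def by auto
    then show ?case using L by (auto intro!: bexI[of _ "0\<^sub>m _ _"] eq_matI)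
  next
    case (step j)
    then obtain G where G: "G \<in> carrier_mat (ks!(j+1)) (ks!(j+2))"
      and GB: "ds!(j+1) * G * ds!(j+1) = ds!(j+1)" by (auto simp: numeral_2_eq_2)
    have "ds!j \<in> carrier_mat (ks!(j+1)) (ks!j)" "ds!(j+1) \<in> carrier_mat (ks!(j+2)) (ks!(j+1))"
      using chain step unfolding is_chain_def by (auto simp: numeral_2_eq_2)
    moreover have "mat_kernel (ds!(j+1)) = mat_image (ds!j)"
      using exact step exact_at_iff_kernel_eq_image[OF chain, of "j+1"] by simp
    ultimately show ?case using inner_inverse_of_exact G GB by blast
  qed
qed

lemma split_exact_iff_exact:
  "split_exact ks ds \<longleftrightarrow>
     is_chain (0 # ks @ [0]) (0\<^sub>m (hd ks) 0 # ds @ [0\<^sub>m 0 (last ks)]) \<and>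
     (\<forall>i. 0 < i \<and> i < length ds + 2 \<longrightarrow>
        exact_at (0 # ks @ [0]) (0\<^sub>m (hd ks) 0 # ds @ [0\<^sub>m 0 (last ks)]) i)"
    (is "_ \<longleftrightarrow> is_chain ?ks ?ds \<and> ?exact")
proof -
  have "\<exists>S \<in> carrier_mat (?ks!i) (?ks!(i+1)). ?ds!i * S * ?ds!i = ?ds!i"
    if chain: "is_chain ?ks ?ds" and exact: ?exact and i: "i < length ?ds" for i
  proof (rule exact_chain_inner_inverses[OF chain _ _ i])
    have "length ks = length ds + 1" using chain unfolding is_chain_def by simp
    then show "?ks ! length ?ds = 0" by (simp add: nth_append)
  qed (use exact in simp)
  then show ?thesis unfolding split_exact_def Let_def by auto
qed

lemma split_exact_three_mapsI:
  fixes d0 d1 d2 :: "'a::comm_ring_1 mat"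
  assumes d0: "d0 \<in> carrier_mat k1 k0" and d1: "d1 \<in> carrier_mat k2 k1"
    and d2: "d2 \<in> carrier_mat k3 k2"
    and ker0: "mat_kernel d0 = {0\<^sub>v k0}" and ker1: "mat_kernel d1 = mat_image d0"
    and ker2: "mat_kernel d2 = mat_image d1" and im2: "mat_image d2 = carrier_vec k3"
  shows "split_exact [k0, k1, k2, k3] [d0, d1, d2]"
proof -
  let ?ks = "[0, k0, k1, k2, k3, 0]" and ?ds = "[0\<^sub>m k0 0, d0, d1, d2, 0\<^sub>m 0 k3]"
  have "d1 * d0 = 0\<^sub>m k2 k0" "d2 * d1 = 0\<^sub>m k3 k1"
    using mult_eq_zero_if_image_subset_kernel[OF d0 d1] mult_eq_zero_if_image_subset_kernel[OF d1 d2]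
      ker1 ker2 by auto
  then have chain: "is_chain ?ks ?ds"
    unfolding is_chain_def using d0 d1 d2
    by (auto simp: numeral_eq_Suc less_Suc_eq intro!: eq_matI)
  have "exact_at ?ks ?ds i" if "0 < i" "i < 5" for i
    using that ker0 ker1 ker2 im2 d2 exact_at_iff_kernel_eq_image[OF chain, of i]
    by (auto simp: numeral_eq_Suc less_Suc_eq)
  with chain show ?thesis unfolding split_exact_iff_exact by simp
qed

lemma split_exact_four_mapsD:
  fixes d0 d1 d2 d3 :: "'a::comm_ring_1 mat"
  assumes "split_exact [k0, k1, k2, k3, k4] [d0, d1, d2, d3]"
  shows "mat_kernel d0 = {0\<^sub>v k0}" "mat_kernel d1 = mat_image d0"
    and "mat_kernel d2 = mat_image d1" "mat_image d3 = carrier_vec k4"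
proof -
  let ?ks = "[0, k0, k1, k2, k3, k4, 0]" and ?ds = "[0\<^sub>m k0 0, d0, d1, d2, d3, 0\<^sub>m 0 k4]"
  have chain: "is_chain ?ks ?ds" and exact: "\<And>i. 0 < i \<Longrightarrow> i < 6 \<Longrightarrow> exact_at ?ks ?ds i"
    using assms unfolding split_exact_iff_exact by auto
  have ker: "mat_kernel (?ds!i) = mat_image (?ds!(i-1))" if "0 < i" "i < 6" for i
    using exact_at_iff_kernel_eq_image[OF chain] exact that by simp
  show "mat_kernel d0 = {0\<^sub>v k0}" using ker[of 1] by simp
  show "mat_kernel d1 = mat_image d0" using ker[of 2] by simp
  show "mat_kernel d2 = mat_image d1" using ker[of 3] by simp
  show "mat_image d3 = carrier_vec k4" using ker[of 5] by simp
qed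

lemma beta_mat_carrier: "beta_mat n \<in> carrier_mat (2 * n) (2 * n)"
  by (simp add: beta_mat_def)

lemma beta_mat_mult_append_vec:
  assumes "v \<in> carrier_vec n" "w \<in> carrier_vec n"
  shows "(beta_mat n :: 'a::comm_ring_1 mat) *\<^sub>v (v @\<^sub>v w) = w @\<^sub>v v"
proof (rule eq_vecI)
  fix k assume "k < dim_vec (w @\<^sub>v v)"
  then have k: "k < 2 * n" using assms by simp
  define c where "c = (if k < n then k + n else k - n)"
  have c: "c < 2 * n" using k by (auto simp: c_def)
  have row: "row (beta_mat n) k = unit_vec (2 * n) c"
    using k by (auto simp: beta_mat_def c_def intro!: eq_vecI)
  have vw: "v @\<^sub>v w \<in> carrier_vec (2 * n)" using assms by (simp add: mult_2)
  have "(beta_mat n *\<^sub>v (v @\<^sub>v w)) $ k = row (beta_mat n) k \<bullet> (v @\<^sub>v w)"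
    using k by (simp add: beta_mat_def)
  also have "\<dots> = (v @\<^sub>v w) $ c" unfolding row using vw c by simp
  finally show "(beta_mat n *\<^sub>v (v @\<^sub>v w)) $ k = (w @\<^sub>v v) $ k"
    using k assms by (auto simp: c_def)
qed (use assms in \<open>auto simp: beta_mat_def\<close>)

lemma clifford_empty: "clifford n x \<omega> {} = (\<Sum>m<n. x $ (n+m) * \<omega> {m})"
  unfolding clifford_def by simp

lemma clifford_pair:
  assumes "i < j" "j < n"
  shows "clifford n x \<omega> {i,j} = x $ i * \<omega> {j} - x $ j * \<omega> {i} +
    (\<Sum>m\<in>{..<n} - {i,j}. (-1) ^ card {l\<in>{i,j}. l < m} * x $ (n+m) * \<omega> (insert m {i,j}))"
proof -
  have below: "{l. (l = i \<or> l = j) \<and> l < i} = {}" "{l. (l = i \<or> l = j) \<and> l < j} = {i}"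
    and remove: "{i,j} - {i} = {j}" "{i,j} - {j} = {i}" using assms by auto
  show ?thesis using assms unfolding clifford_def by (simp add: below remove)
qed

text \<open>The coefficient of \<open>e\<^sub>i \<and> e\<^sub>j\<close> in the contraction of \<open>\<omega>\<close> by \<open>e\<^sub>m\<^sup>*\<close>,
  extended antisymmetrically in \<open>i, j\<close>.\<close>
definition contraction_coeff :: "(nat set \<Rightarrow> 'a::comm_ring_1) \<Rightarrow> nat \<Rightarrow> nat \<Rightarrow> nat \<Rightarrow> 'a" where
  "contraction_coeff \<omega> i j m =
     (if i = j \<or> m = i \<or> m = j then 0
      else (if i < j then 1 else -1) * (-1) ^ card {l\<in>{i,j}. l < m} * \<omega> (insert m {i,j}))"

lemma contraction_coeff_swap: "contraction_coeff \<omega> j i m = - contraction_coeff \<omega> i j m"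
  unfolding contraction_coeff_def by (auto simp: insert_commute conj_disj_distribR)

text \<open>The degree-two component of \<open>x \<cdot> \<omega> = 0\<close>.\<close>
lemma annihilated_pair_relation:
  assumes ann: "clifford n x \<omega> = (\<lambda>_. 0)" and "i < n" "j < n"
  shows "(\<Sum>m<n. contraction_coeff \<omega> i j m * x $ (n+m)) = x $ j * \<omega> {i} - x $ i * \<omega> {j}"
proof -
  have ordered: "(\<Sum>m<n. contraction_coeff \<omega> i j m * x $ (n+m)) = x $ j * \<omega> {i} - x $ i * \<omega> {j}"
    if ij: "i < j" "j < n" for i j
  proof -
    have "(\<Sum>m<n. contraction_coeff \<omega> i j m * x $ (n+m)) =
        (\<Sum>m\<in>{..<n} - {i,j}. (-1) ^ card {l\<in>{i,j}. l < m} * x $ (n+m) * \<omega> (insert m {i,j}))"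
      using ij by (intro sum.mono_neutral_cong_right) (auto simp: contraction_coeff_def mult_ac)
    also have "\<dots> = x $ j * \<omega> {i} - x $ i * \<omega> {j}"
      using clifford_pair[OF ij, of x \<omega>] ann by (simp add: algebra_simps eq_neg_iff_add_eq_0)
    finally show ?thesis .
  qed
  consider "i < j" | "j < i" | "i = j" by linarith
  then show ?thesis
  proof cases
    case 2
    then have "- (\<Sum>m<n. contraction_coeff \<omega> i j m * x $ (n+m)) = x $ i * \<omega> {j} - x $ j * \<omega> {i}"
      using ordered[of j i] assms by (simp add: contraction_coeff_swap[of \<omega> j i] sum_negf)
    then show ?thesis by (metis minus_diff_eq minus_minus)
  qed (use ordered assms in \<open>auto simp: contraction_coeff_def\<close>)
qed

lemma emb_inj_comm_ring_hom: "inj_comm_ring_hom (emb :: 'a::idom \<Rightarrow> 'a fract)"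
  by unfold_locales (auto simp: emb_def One_fract_def Zero_fract_def eq_fract)

lemma clifford_map_vec_emb:
  assumes "dim_vec x = 2 * n"
  shows "clifford n (map_vec emb x) (\<lambda>S. emb (\<omega> S)) S = emb (clifford n x \<omega> S)"
proof -
  interpret emb: inj_comm_ring_hom "emb :: 'a \<Rightarrow> 'a fract" by (rule emb_inj_comm_ring_hom)
  have "map_vec emb x $ i = emb (x $ i)" if "i < 2 * n" for i
    using assms that by simp
  then show ?thesis unfolding clifford_def
    by (auto simp: emb.hom_add emb.hom_mult emb.hom_sum emb.hom_power emb.hom_uminus
        emb.hom_one emb.hom_zero intro!: sum.cong)
qed

lemma koszul_relation_lift:
  fixes a b f lam \<sigma> :: "nat \<Rightarrow> 'a::comm_ring_1" and T :: "nat \<Rightarrow> nat \<Rightarrow> nat \<Rightarrow> 'a"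
  assumes rel: "\<And>i j. i < n \<Longrightarrow> j < n \<Longrightarrow> (\<Sum>m<n. T i j m * b m) = a j * \<sigma> i - a i * \<sigma> j"
    and unimodular: "(\<Sum>j<n. \<sigma> j * lam j) = 1" and orth: "(\<Sum>j<n. \<sigma> j * f j) = 0"
  shows "(\<Sum>l<n. a l * f l) = (\<Sum>m<n. b m * (\<Sum>i<n. \<Sum>j<n. lam i * f j * T i j m))"
proof -
  have "(\<Sum>m<n. b m * (\<Sum>i<n. \<Sum>j<n. lam i * f j * T i j m)) =
      (\<Sum>m<n. \<Sum>i<n. \<Sum>j<n. lam i * f j * (T i j m * b m))"
    by (simp add: sum_distrib_left mult_ac)
  also have "\<dots> = (\<Sum>i<n. \<Sum>j<n. \<Sum>m<n. lam i * f j * (T i j m * b m))"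
    by (rule trans[OF sum.swap], rule sum.cong[OF refl], rule sum.swap)
  also have "\<dots> = (\<Sum>i<n. \<Sum>j<n. lam i * f j * (a j * \<sigma> i - a i * \<sigma> j))"
    by (simp add: rel flip: sum_distrib_left)
  also have "\<dots> = (\<Sum>i<n. \<Sum>j<n. (\<sigma> i * lam i) * (a j * f j) - (lam i * a i) * (\<sigma> j * f j))"
    by (intro sum.cong refl) (simp add: algebra_simps)
  also have "\<dots> = (\<Sum>i<n. \<sigma> i * lam i) * (\<Sum>j<n. a j * f j) - (\<Sum>i<n. lam i * a i) * (\<Sum>j<n. \<sigma> j * f j)"
    by (simp add: sum_product sum_subtractf)
  finally show ?thesis using unimodular orth by (simp add: mult.commute)
qed

lemma prime_ideal_zero: "prime_ideal {0::'a::idom}"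
proof -
  have "(1::'a) \<notin> {0}" by simp
  then have "{0::'a} \<noteq> UNIV" by blast
  then show ?thesis unfolding prime_ideal_def is_ideal_def by auto
qed

lemma loc_ring_zero_ideal: "loc_ring {0::'a::idom} = UNIV"
proof -
  have "x \<in> loc_ring {0}" for x :: "'a fract"
    by (cases x) (auto simp: loc_ring_def)
  then show ?thesis by auto
qed

lemma loc_vecs_zero_ideal: "loc_vecs {0::'a::idom} k = carrier_vec k"
  by (auto simp: loc_vecs_def loc_ring_zero_ideal)

lemma not_in_supp_coker_zero_ideal:
  fixes M :: "'a::idom mat"
  assumes M: "M \<in> carrier_mat m k" and surj: "mat_image M = carrier_vec m"
  shows "\<not> in_supp_coker {0} M"
proof -
  interpret emb: inj_comm_ring_hom "emb :: 'a \<Rightarrow> 'a fract" by (rule emb_inj_comm_ring_hom)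
  obtain S where S: "S \<in> carrier_mat k m" and MS: "M * S = 1\<^sub>m m"
    using mat_factor_through_image[OF M one_carrier_mat] surj by auto
  have dim: "dim_col M = k" "dim_row M = m" using M by auto
  have "v \<in> loc_image {0} M" if v: "v \<in> carrier_vec m" for v :: "'a fract vec"
  proof -
    let ?c = "map_mat emb S *\<^sub>v v"
    have c: "?c \<in> carrier_vec k" using S v by simp
    have "map_mat emb M *\<^sub>v ?c = map_mat emb (M * S) *\<^sub>v v"
      using M S v by (simp add: emb.mat_hom_mult assoc_mult_mat_vec[of _ m k _ m])
    also have "\<dots> = v" using v by (simp add: MS emb.mat_hom_one)
    finally have "v = map_mat emb M *\<^sub>v ?c" ..
    then show ?thesis unfolding loc_image_def loc_vecs_zero_ideal dim using c by blast
  qed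
  moreover have "loc_image {0} M \<subseteq> carrier_vec m"
    unfolding loc_image_def loc_vecs_zero_ideal using M by auto
  ultimately show ?thesis
    unfolding in_supp_coker_def loc_vecs_zero_ideal using M by auto
qed

lemma clifford_annihilates_image_zero_ideal:
  fixes D :: "'a::idom mat"
  assumes D: "D \<in> carrier_mat (2 * n) k"
    and ann: "(\<lambda>S. emb (\<omega> S)) \<in> loc_annihilated {0} n D" and v: "v \<in> carrier_vec k"
  shows "clifford n (D *\<^sub>v v) \<omega> = (\<lambda>_. 0)"
proof -
  interpret emb: inj_comm_ring_hom "emb :: 'a \<Rightarrow> 'a fract" by (rule emb_inj_comm_ring_hom)
  have "map_vec emb (D *\<^sub>v v) = map_mat emb D *\<^sub>v map_vec emb v"
    using D v by (simp add: emb.mult_mat_vec_hom)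
  then have "map_vec emb (D *\<^sub>v v) \<in> loc_image {0} D"
    unfolding loc_image_def loc_vecs_zero_ideal using D v by auto
  then have "clifford n (map_vec emb (D *\<^sub>v v)) (\<lambda>S. emb (\<omega> S)) = (\<lambda>_. 0)"
    using ann unfolding loc_annihilated_def by blast
  then show ?thesis
    using clifford_map_vec_emb[of "D *\<^sub>v v" n \<omega>] D by (auto dest: fun_cong)
qed

text \<open>\<open>A3\<close>, \<open>A2\<close>, \<open>A1\<close> below are \<open>d\<^sub>3\<close>, \<open>d\<^sub>2\<close>, \<open>d\<^sub>1\<close> of \<open>\<AA>\<close>, with \<open>B\<^sub>1\<^sup>* = R\<^sup>N\<close> and
  \<open>B\<^sub>0\<^sup>* = R\<^sup>m\<^sup>0\<close>.\<close>
locale pure_spinor_complex =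
  fixes n N m0 :: nat and D4 D3 :: "'a::comm_ring_1 mat"
    and s :: "nat set \<Rightarrow> 'a" and u lam :: "'a vec"
  assumes D4_carrier: "D4 \<in> carrier_mat N m0"
    and D3_carrier: "D3 \<in> carrier_mat (2 * n) N"
    and kernel_D4: "mat_kernel D4 = {0\<^sub>v m0}"
    and kernel_D3: "mat_kernel D3 = mat_image D4"
    and kernel_D3_dual: "mat_kernel (transpose_mat D3 * beta_mat n) = mat_image D3"
    and annihilates: "\<And>v. v \<in> carrier_vec N \<Longrightarrow> clifford n (D3 *\<^sub>v v) s = (\<lambda>_. 0)"
    and u_carrier: "u \<in> carrier_vec N"
    and D3_u: "D3 *\<^sub>v u = vec (2 * n) (\<lambda>i. if i < n then deg1 n s $ i else 0)"
    and lam_carrier: "lam \<in> carrier_vec n"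
    and unimodular: "(\<Sum>j<n. s {j} * lam $ j) = 1"
begin

definition A3 :: "'a mat" where
  "A3 = mat N (m0 + 1) (\<lambda>(i, j). if j < m0 then D4 $$ (i, j) else u $ i)"

definition A2 :: "'a mat" where
  "A2 = mat n N (\<lambda>(i, j). D3 $$ (n + i, j))"

definition A1 :: "'a mat" where
  "A1 = A_d1 n (deg1 n s)"

lemma A3_carrier: "A3 \<in> carrier_mat N (m0 + 1)"
  by (simp add: A3_def)

lemma A2_carrier: "A2 \<in> carrier_mat n N"
  by (simp add: A2_def)

lemma A1_carrier: "A1 \<in> carrier_mat 1 n"
  by (simp add: A1_def A_d1_def)

lemma A3_mult_vec:
  assumes v: "v \<in> carrier_vec (m0 + 1)"
  shows "A3 *\<^sub>v v = D4 *\<^sub>v vec_first v m0 + v $ m0 \<cdot>\<^sub>v u"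
proof (rule eq_vecI)
  fix k assume "k < dim_vec (D4 *\<^sub>v vec_first v m0 + v $ m0 \<cdot>\<^sub>v u)"
  then have k: "k < N" using D4_carrier u_carrier by simp
  have "(A3 *\<^sub>v v) $ k = (\<Sum>j<m0 + 1. A3 $$ (k, j) * v $ j)"
    using k v by (simp add: A3_def scalar_prod_def atLeast0LessThan)
  also have "\<dots> = (\<Sum>j<m0. D4 $$ (k, j) * vec_first v m0 $ j) + v $ m0 * u $ k"
    using k by (simp add: A3_def vec_first_def)
  finally show "(A3 *\<^sub>v v) $ k = (D4 *\<^sub>v vec_first v m0 + v $ m0 \<cdot>\<^sub>v u) $ k"
    using k D4_carrier u_carrier by (simp add: scalar_prod_def atLeast0LessThan)
qed (use D4_carrier u_carrier in \<open>simp add: A3_def\<close>)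

lemma A2_mult_vec: "v \<in> carrier_vec N \<Longrightarrow> A2 *\<^sub>v v = vec_last (D3 *\<^sub>v v) n"
  using D3_carrier by (auto simp: A2_def vec_last_def scalar_prod_def intro!: eq_vecI)

lemma A1_mult_vec: "f \<in> carrier_vec n \<Longrightarrow> A1 *\<^sub>v f = vec 1 (\<lambda>_. \<Sum>j<n. s {j} * f $ j)"
  by (auto simp: A1_def A_d1_def deg1_def scalar_prod_def atLeast0LessThan intro!: eq_vecI)

lemma D3_u_top: "i < n \<Longrightarrow> (D3 *\<^sub>v u) $ i = s {i}"
  using D3_u by (simp add: deg1_def)

lemma D3_u_bottom: "i < n \<Longrightarrow> (D3 *\<^sub>v u) $ (n + i) = 0"
  using D3_u by simp

lemma D3_mult_A3:
  assumes v: "v \<in> carrier_vec (m0 + 1)"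
  shows "D3 *\<^sub>v (A3 *\<^sub>v v) = v $ m0 \<cdot>\<^sub>v (D3 *\<^sub>v u)"
proof -
  have "D4 *\<^sub>v vec_first v m0 \<in> mat_kernel D3"
    using kernel_D3 mat_imageI[OF D4_carrier] by simp
  then have "D3 *\<^sub>v (D4 *\<^sub>v vec_first v m0) = 0\<^sub>v (2 * n)"
    using D3_carrier by (simp add: mat_kernel_def)
  then show ?thesis using D3_carrier D4_carrier u_carrier
    by (simp add: A3_mult_vec[OF v] mult_add_distrib_mat_vec[of _ "2 * n" N] mult_mat_vec_smult_vec)
qed

lemma bottom_pairing_zero:
  "v \<in> carrier_vec N \<Longrightarrow> (\<Sum>m<n. (D3 *\<^sub>v v) $ (n + m) * s {m}) = 0"
  using clifford_empty[of n "D3 *\<^sub>v v" s] annihilates by (metis fun_cong)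

lemma unimodular_cancel:
  assumes "\<And>l. l < n \<Longrightarrow> r * s {l} = 0"
  shows "r = 0"
proof -
  have "(\<Sum>j<n. (r * s {j}) * lam $ j) = 0" using assms by simp
  then show "r = 0" using unimodular by (simp add: mult.assoc flip: sum_distrib_left)
qed

text \<open>An element of \<open>im \<delta>\<^sub>3\<close> lying in \<open>H\<close> is a multiple of \<open>(s\<^sub>1, 0)\<close>: the pair relations
  make \<open>x\<^sub>k s\<^sub>i = x\<^sub>i s\<^sub>k\<close>, and \<open>\<lambda>\<close> recovers the factor.\<close>
lemma D3_mult_vec_eq_smult_D3_u:
  assumes v: "v \<in> carrier_vec N" and A2v: "A2 *\<^sub>v v = 0\<^sub>v n"
  shows "D3 *\<^sub>v v = (\<Sum>i<n. lam $ i * (D3 *\<^sub>v v) $ i) \<cdot>\<^sub>v (D3 *\<^sub>v u)"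
    (is "?x = ?r \<cdot>\<^sub>v _")
proof (rule eq_vecI)
  have bottom: "?x $ (n + i) = 0" if i: "i < n" for i
  proof -
    have "?x $ (n + i) = (A2 *\<^sub>v v) $ i"
      using i D3_carrier by (simp add: A2_mult_vec[OF v] vec_last_def)
    then show ?thesis using A2v i by simp
  qed
  have swap: "?x $ k * s {i} = ?x $ i * s {k}" if "i < n" "k < n" for i k
    using annihilated_pair_relation[OF annihilates[OF v] that] bottom by simp
  have top: "?x $ k = ?r * s {k}" if k: "k < n" for k
  proof -
    have "?r * s {k} = (\<Sum>i<n. lam $ i * (?x $ i * s {k}))"
      unfolding sum_distrib_right by (simp add: mult_ac)
    also have "\<dots> = ?x $ k * (\<Sum>i<n. s {i} * lam $ i)"
      using swap k by (simp add: sum_distrib_left mult_ac)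
    finally show ?thesis using unimodular by simp
  qed
  fix l assume "l < dim_vec (?r \<cdot>\<^sub>v (D3 *\<^sub>v u))"
  then have l: "l < 2 * n" using D3_carrier by simp
  have smult: "(?r \<cdot>\<^sub>v (D3 *\<^sub>v u)) $ l = ?r * (D3 *\<^sub>v u) $ l" using l D3_carrier by simp
  show "?x $ l = (?r \<cdot>\<^sub>v (D3 *\<^sub>v u)) $ l"
  proof (cases "l < n")
    case True
    have "?x $ l = ?r * s {l}" by (rule top[OF True])
    also have "\<dots> = ?r * (D3 *\<^sub>v u) $ l" by (simp only: D3_u_top[OF True])
    finally show ?thesis unfolding smult .
  next
    case False
    define i where "i = l - n"
    have i: "i < n" and li: "l = n + i" using False l by (auto simp: i_def)
    have "?x $ l = 0" unfolding li by (rule bottom[OF i])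
    also have "\<dots> = ?r * (D3 *\<^sub>v u) $ l" unfolding li D3_u_bottom[OF i] by simp
    finally show ?thesis unfolding smult .
  qed
qed (use D3_carrier in simp)

lemma kernel_A3: "mat_kernel A3 = {0\<^sub>v (m0 + 1)}"
proof (intro equalityI subsetI)
  fix v assume "v \<in> mat_kernel A3"
  then have v: "v \<in> carrier_vec (m0 + 1)" and A3v: "A3 *\<^sub>v v = 0\<^sub>v N"
    using mat_kernelD[OF A3_carrier] by auto
  have zero: "v $ m0 \<cdot>\<^sub>v (D3 *\<^sub>v u) = 0\<^sub>v (2 * n)"
    using D3_mult_A3[OF v] A3v D3_carrier by simp
  have "v $ m0 * s {l} = 0" if l: "l < n" for l
  proof -
    have "v $ m0 * s {l} = (v $ m0 \<cdot>\<^sub>v (D3 *\<^sub>v u)) $ l" using l D3_u_top[OF l] D3_carrier by simp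
    then show ?thesis using zero l by simp
  qed
  then have last: "v $ m0 = 0" by (rule unimodular_cancel)
  then have "D4 *\<^sub>v vec_first v m0 = A3 *\<^sub>v v"
    using A3_mult_vec[OF v] D4_carrier u_carrier by (auto intro!: eq_vecI)
  then have "vec_first v m0 \<in> mat_kernel D4"
    using A3v by (auto intro: mat_kernelI[OF D4_carrier])
  then have "vec_first v m0 = 0\<^sub>v m0" using kernel_D4 by simp
  moreover have "vec_last v 1 = 0\<^sub>v 1" using v last by (auto simp: vec_last_def intro!: eq_vecI)
  ultimately have "v = 0\<^sub>v m0 @\<^sub>v 0\<^sub>v 1" using vec_first_last_append[OF v] by simp
  then show "v \<in> {0\<^sub>v (m0 + 1)}" by (auto intro!: eq_vecI)
qed (use A3_carrier in \<open>auto intro: mat_kernelI\<close>)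

lemma kernel_A2: "mat_kernel A2 = mat_image A3"
proof (intro equalityI subsetI)
  fix v assume "v \<in> mat_kernel A2"
  then have v: "v \<in> carrier_vec N" and A2v: "A2 *\<^sub>v v = 0\<^sub>v n"
    using mat_kernelD[OF A2_carrier] by auto
  define r where "r = (\<Sum>i<n. lam $ i * (D3 *\<^sub>v v) $ i)"
  have "D3 *\<^sub>v (v - r \<cdot>\<^sub>v u) = D3 *\<^sub>v v - r \<cdot>\<^sub>v (D3 *\<^sub>v u)"
    using D3_carrier v u_carrier
    by (simp add: mult_minus_distrib_mat_vec[of _ "2 * n" N] mult_mat_vec_smult_vec)
  also have "D3 *\<^sub>v v = r \<cdot>\<^sub>v (D3 *\<^sub>v u)"
    using D3_mult_vec_eq_smult_D3_u[OF v A2v] by (simp only: r_def)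
  also have "r \<cdot>\<^sub>v (D3 *\<^sub>v u) - r \<cdot>\<^sub>v (D3 *\<^sub>v u) = 0\<^sub>v (2 * n)"
    using D3_carrier u_carrier by simp
  finally have "v - r \<cdot>\<^sub>v u \<in> mat_kernel D3"
    using v u_carrier by (intro mat_kernelI[OF D3_carrier]) auto
  then have "v - r \<cdot>\<^sub>v u \<in> mat_image D4" using kernel_D3 by simp
  then obtain w0 where w0: "w0 \<in> carrier_vec m0" and vw0: "v - r \<cdot>\<^sub>v u = D4 *\<^sub>v w0"
    by (rule mat_imageE[OF D4_carrier])
  let ?w = "w0 @\<^sub>v vec 1 (\<lambda>_. r)"
  have w: "?w \<in> carrier_vec (m0 + 1)" using w0 by (intro append_carrier_vec) auto
  have "A3 *\<^sub>v ?w = D4 *\<^sub>v w0 + r \<cdot>\<^sub>v u" unfolding A3_mult_vec[OF w] using w0 by simp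
  also have "\<dots> = v"
  proof (rule eq_vecI)
    fix k assume "k < dim_vec v"
    then have k: "k < N" using v by simp
    have "(D4 *\<^sub>v w0) $ k = v $ k - r * u $ k"
      using arg_cong[OF vw0, of "\<lambda>x. x $ k"] k v u_carrier by simp
    then show "(D4 *\<^sub>v w0 + r \<cdot>\<^sub>v u) $ k = v $ k" using k D4_carrier u_carrier by simp
  qed (use v D4_carrier u_carrier in simp)
  finally show "v \<in> mat_image A3" using mat_imageI[OF A3_carrier w] by simp
next
  fix v assume "v \<in> mat_image A3"
  then obtain w where w: "w \<in> carrier_vec (m0 + 1)" and vw: "v = A3 *\<^sub>v w"
    by (rule mat_imageE[OF A3_carrier])
  have "A2 *\<^sub>v v = vec_last (w $ m0 \<cdot>\<^sub>v (D3 *\<^sub>v u)) n"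
    using w A3_carrier by (simp add: vw A2_mult_vec D3_mult_A3)
  also have "\<dots> = 0\<^sub>v n"
    using D3_carrier D3_u_bottom by (auto simp: vec_last_def intro!: eq_vecI)
  finally show "v \<in> mat_kernel A2"
    using vw w A3_carrier by (auto intro: mat_kernelI[OF A2_carrier])
qed

definition koszul_lift :: "'a vec \<Rightarrow> 'a vec" where
  "koszul_lift f = vec n (\<lambda>m. - (\<Sum>i<n. \<Sum>j<n. lam $ i * f $ j * contraction_coeff s i j m))"

lemma image_D3_orthogonal_lift:
  assumes f: "f \<in> carrier_vec n" and orth: "(\<Sum>j<n. s {j} * f $ j) = 0"
    and v: "v \<in> carrier_vec N"
  shows "(D3 *\<^sub>v v) \<bullet> (f @\<^sub>v koszul_lift f) = 0"
proof -
  let ?x = "D3 *\<^sub>v v"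
  have x: "?x \<in> carrier_vec (n + n)" using D3_carrier v by (simp add: mult_2)
  have "?x \<bullet> (f @\<^sub>v koszul_lift f) = (vec_first ?x n @\<^sub>v vec_last ?x n) \<bullet> (f @\<^sub>v koszul_lift f)"
    using vec_first_last_append[OF x] by simp
  also have "\<dots> = vec_first ?x n \<bullet> f + vec_last ?x n \<bullet> koszul_lift f"
    by (rule scalar_prod_append) (use f in \<open>auto simp: koszul_lift_def\<close>)
  also have "\<dots> = (\<Sum>l<n. ?x $ l * f $ l) -
      (\<Sum>m<n. ?x $ (n + m) * (\<Sum>i<n. \<Sum>j<n. lam $ i * f $ j * contraction_coeff s i j m))"
    using D3_carrier v f
    by (simp add: scalar_prod_def vec_first_def vec_last_def koszul_lift_def atLeast0LessThan sum_negf)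
  also have "\<dots> = 0"
    using koszul_relation_lift[where a = "\<lambda>l. ?x $ l" and b = "\<lambda>m. ?x $ (n + m)"
        and f = "\<lambda>j. f $ j" and lam = "\<lambda>i. lam $ i" and \<sigma> = "\<lambda>i. s {i}" and T = "contraction_coeff s"]
      annihilated_pair_relation[OF annihilates[OF v]] unimodular orth
    by simp
  finally show ?thesis .
qed

lemma kernel_A1: "mat_kernel A1 = mat_image A2"
proof (intro equalityI subsetI)
  fix f assume "f \<in> mat_kernel A1"
  then have f: "f \<in> carrier_vec n" and A1f: "A1 *\<^sub>v f = 0\<^sub>v 1"
    using mat_kernelD[OF A1_carrier] by auto
  have "(A1 *\<^sub>v f) $ 0 = 0" using A1f by simp
  then have orth: "(\<Sum>j<n. s {j} * f $ j) = 0" using A1_mult_vec[OF f] by simp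
  have lift: "koszul_lift f \<in> carrier_vec n" by (simp add: koszul_lift_def)
  have "transpose_mat D3 *\<^sub>v (f @\<^sub>v koszul_lift f) = 0\<^sub>v N"
  proof (rule eq_vecI)
    fix k assume "k < dim_vec (0\<^sub>v N :: 'a vec)"
    then have k: "k < N" by simp
    have "(transpose_mat D3 *\<^sub>v (f @\<^sub>v koszul_lift f)) $ k = (D3 *\<^sub>v unit_vec N k) \<bullet> (f @\<^sub>v koszul_lift f)"
      using k D3_carrier by (simp add: row_transpose mult_mat_vec_unit_vec)
    also have "\<dots> = 0" using image_D3_orthogonal_lift[OF f orth] k by simp
    finally show "(transpose_mat D3 *\<^sub>v (f @\<^sub>v koszul_lift f)) $ k = 0\<^sub>v N $ k" using k by simp
  qed (use D3_carrier in simp)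
  have y: "koszul_lift f @\<^sub>v f \<in> carrier_vec (2 * n)" using lift f by (simp add: mult_2)
  then have "(transpose_mat D3 * beta_mat n) *\<^sub>v (koszul_lift f @\<^sub>v f) =
      transpose_mat D3 *\<^sub>v (beta_mat n *\<^sub>v (koszul_lift f @\<^sub>v f))"
    using D3_carrier beta_mat_carrier by (intro assoc_mult_mat_vec) auto
  also have "\<dots> = 0\<^sub>v N" using \<open>transpose_mat D3 *\<^sub>v (f @\<^sub>v koszul_lift f) = 0\<^sub>v N\<close>
    by (simp add: beta_mat_mult_append_vec[OF lift f])
  finally have "(transpose_mat D3 * beta_mat n) *\<^sub>v (koszul_lift f @\<^sub>v f) = 0\<^sub>v N" .
  then have "koszul_lift f @\<^sub>v f \<in> mat_kernel (transpose_mat D3 * beta_mat n)"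
    using D3_carrier by (intro mat_kernelI[OF mult_carrier_mat[OF _ beta_mat_carrier] y]) auto
  then have "koszul_lift f @\<^sub>v f \<in> mat_image D3" using kernel_D3_dual by simp
  then obtain c where c: "c \<in> carrier_vec N" and y: "koszul_lift f @\<^sub>v f = D3 *\<^sub>v c"
    by (rule mat_imageE[OF D3_carrier])
  have "A2 *\<^sub>v c = f" using f by (simp add: A2_mult_vec[OF c] flip: y)
  then show "f \<in> mat_image A2" using mat_imageI[OF A2_carrier c] by simp
next
  fix f assume "f \<in> mat_image A2"
  then obtain c where c: "c \<in> carrier_vec N" and fc: "f = A2 *\<^sub>v c"
    by (rule mat_imageE[OF A2_carrier])
  have "A1 *\<^sub>v f = 0\<^sub>v 1"
    using bottom_pairing_zero[OF c] A2_carrier c D3_carrier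
    by (auto simp: fc A1_mult_vec A2_mult_vec vec_last_def mult.commute intro!: eq_vecI)
  then show "f \<in> mat_kernel A1"
    using fc c A2_carrier by (auto intro: mat_kernelI[OF A1_carrier])
qed

lemma image_A1: "mat_image A1 = carrier_vec 1"
proof (intro equalityI subsetI)
  fix r :: "'a vec" assume r: "r \<in> carrier_vec 1"
  have "A1 *\<^sub>v (r $ 0 \<cdot>\<^sub>v lam) = vec 1 (\<lambda>_. r $ 0 * (\<Sum>j<n. s {j} * lam $ j))"
    using lam_carrier by (simp add: A1_mult_vec sum_distrib_left mult_ac)
  also have "\<dots> = r" using r unimodular by (auto intro!: eq_vecI)
  moreover have "A1 *\<^sub>v (r $ 0 \<cdot>\<^sub>v lam) \<in> mat_image A1"
    using lam_carrier by (intro mat_imageI[OF A1_carrier]) simp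
  ultimately show "r \<in> mat_image A1" by simp
next
  fix r assume "r \<in> mat_image A1"
  then show "r \<in> carrier_vec 1" by (rule mat_imageE[OF A1_carrier]) (use A1_carrier in simp)
qed

theorem split_exact_A: "split_exact [m0 + 1, N, n, 1] [A3, A2, A1]"
  by (rule split_exact_three_mapsI[OF A3_carrier A2_carrier A1_carrier
        kernel_A3 kernel_A2 kernel_A1 image_A1])

end

theorem mainTheorem10:
  fixes p q :: nat
    and D4 D3 :: "'a::{factorial_semiring, idom} mat"
    and s :: "nat set \<Rightarrow> 'a"
    and u :: "'a vec"
  defines "n \<equiv> p + 2"
  assumes noeth: "noetherian_ring TYPE('a)"
    and half: "is_unit (2::'a)"
    and p: "1 \<le> p" and q: "3 \<le> q"
    and D4: "D4 \<in> carrier_mat (p + q) (q - 2)"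
    and D3: "D3 \<in> carrier_mat (2 * n) (p + q)"
    and B_split: "split_exact (cplxB_dims p q) (cplxB_maps n D4 D3)"
    and s_ext: "s \<in> ext_alg n"
    and s_odd: "\<forall>S. s S \<noteq> 0 \<longrightarrow> odd (card S)"
    and s_gen: "\<forall>P. prime_ideal P \<and> \<not> in_supp_coker P (transpose_mat D4) \<longrightarrow>
                  loc_annihilated P n D3 = {(\<lambda>S. r * emb (s S)) | r. r \<in> loc_ring P}"
    and u: "u \<in> carrier_vec (p + q)"
    and u_lift: "D3 *\<^sub>v u = vec (2 * n) (\<lambda>i. if i < n then deg1 n s $ i else 0)"
    and I_eq_R: "{(A_d1 n (deg1 n s) *\<^sub>v f) $ 0 | f. f \<in> carrier_vec n} = UNIV"
  shows "split_exact (cplxA_dims p q) (cplxA_maps p q D4 D3 u (deg1 n s))"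
proof -
  let ?Bd = "transpose_mat D3 * beta_mat n"
  have "split_exact [q - 2, p + q, 2 * n, p + q, q - 2] [D4, D3, ?Bd, transpose_mat D4]"
    using B_split by (simp add: cplxB_dims_def cplxB_maps_def n_def)
  note B_exact = split_exact_four_mapsD[OF this]
  have "\<not> in_supp_coker {0} (transpose_mat D4)"
    using D4 B_exact(4) by (intro not_in_supp_coker_zero_ideal) auto
  then have "loc_annihilated {0} n D3 = {(\<lambda>S. r * emb (s S)) | r. r \<in> loc_ring {0}}"
    using s_gen prime_ideal_zero by blast
  then have "(\<lambda>S. 1 * emb (s S)) \<in> loc_annihilated {0} n D3"
    unfolding loc_ring_zero_ideal by blast
  then have annihilates: "\<And>v. v \<in> carrier_vec (p + q) \<Longrightarrow> clifford n (D3 *\<^sub>v v) s = (\<lambda>_. 0)"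
    using clifford_annihilates_image_zero_ideal[OF D3] by simp
  have "1 \<in> {(A_d1 n (deg1 n s) *\<^sub>v f) $ 0 | f. f \<in> carrier_vec n}"
    unfolding I_eq_R ..
  then obtain lam where lam: "lam \<in> carrier_vec n" and "(A_d1 n (deg1 n s) *\<^sub>v lam) $ 0 = 1"
    by auto
  then have unimodular: "(\<Sum>j<n. s {j} * lam $ j) = 1"
    by (simp add: A_d1_def deg1_def scalar_prod_def atLeast0LessThan)
  interpret pure_spinor_complex n "p + q" "q - 2" D4 D3 s u lam
    using D4 D3 B_exact u u_lift lam unimodular annihilates by unfold_locales auto
  have "cplxA_maps p q D4 D3 u (deg1 n s) = [A3, A2, A1]"
    unfolding A3_def A2_def A1_def by (simp add: cplxA_maps_def A_d3_def A_d2_def n_def)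
  then show ?thesis using split_exact_A by (simp add: cplxA_dims_def n_def)
qed

end
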